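(* Let $n\ge 1$, let $x_0<x_1<\dots<x_n$ be real numbers and let $\hat x_0<\hat x_1<\dots<\hat x_n$ be real numbers with $\hat x_0=x_0$ and $\hat x_n=x_n$. Fix $k\in\{0,\dots,n\}$. If $\xi:=\sum_{j\neq k}|r_{jk}(\mathbf{x},\hat{\mathbf{x}})|<1$, then \[ -\frac{\xi^2}{(1-\xi)^3}\Bigl(1+\tfrac14\xi^2\Bigr)\ \le\ z_k(\mathbf{x},\hat{\mathbf{x}})-\sum_{j\neq k} r_{jk}(\mathbf{x},\hat{\mathbf{x}})\ \le\ \frac{\xi^2}{1-\xi}. \]
   Context: For distinct nodes $\mathbf{x}=(x_0,\dots,x_n)$ the barycentric weights are $\lambda_k(\mathbf{x}):=1/\prod_{j\neq k}(x_k-x_j)$. For two node vectors $\mathbf{x},\hat{\mathbf{x}}$ define the relative weight errors $z_k(\mathbf{x},\hat{\mathbf{x}}):=\dfrac{\lambda_k(\mathbf{x})-\lambda_k(\hat{\mathbf{x}})}{\lambda_k(\hat{\mathbf{x}})}$ and the relative errors in node differences $r_{jk}(\mathbf{x},\hat{\mathbf{x}}):=\dfrac{\hat x_k-\hat x_j}{x_k-x_j}-1$ for $j\neq k$. *)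

theory Defs
  imports Complex_Main
begin

text \<open>Nodes x_0,...,x_n are represented as functions nat => real, only indices 0..n matter.\<close>

definition bary_weight :: "nat \<Rightarrow> (nat \<Rightarrow> real) \<Rightarrow> nat \<Rightarrow> real" where
  "bary_weight n x k = 1 / (\<Prod>j\<in>{0..n} - {k}. (x k - x j))"

definition rel_weight_err :: "nat \<Rightarrow> (nat \<Rightarrow> real) \<Rightarrow> (nat \<Rightarrow> real) \<Rightarrow> nat \<Rightarrow> real" where
  "rel_weight_err n x xh k = (bary_weight n x k - bary_weight n xh k) / bary_weight n xh k"

definition rel_diff_err :: "(nat \<Rightarrow> real) \<Rightarrow> (nat \<Rightarrow> real) \<Rightarrow> nat \<Rightarrow> nat \<Rightarrow> real" where
  "rel_diff_err x xh j k = (xh k - xh j) / (x k - x j) - 1"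

end

theory Submission
  imports Defs "HOL-Analysis.Infinite_Products"
begin

text \<open>
  Since the ratio of the weights is a product of ratios of node differences, the relative
  weight error is exactly z_k = prod_{j<>k} (1 + r_jk) - 1, so z_k - sum_{j<>k} r_jk is the
  remainder of the first-order expansion of a product. Expanding the product, this remainder
  is dominated termwise by the remainder of prod (1 + |r_jk|), and
  prod (1 + |r_jk|) <= exp xi <= 1 / (1 - xi); hence |z_k - sum r_jk| <= xi^2 / (1 - xi).
  The stated lower bound is weaker than this.
\<close>

lemma strict_mono_on_atLeastAtMost_Suc:
  fixes x :: "nat \<Rightarrow> 'a::order"
  assumes "\<And>i. i < n \<Longrightarrow> x i < x (Suc i)"
  shows "strict_mono_on {0..n} x"
proof (rule strict_mono_onI)
  fix i j assume "i \<in> {0..n}" "j \<in> {0..n}" "i < j"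
  have "j \<le> n \<longrightarrow> x i < x j"
    using \<open>i < j\<close> by (induction i j rule: less_Suc_induct) (auto intro: assms order.strict_trans)
  then show "x i < x j" using \<open>j \<in> {0..n}\<close> by simp
qed

lemma rel_weight_err_eq_prod:
  assumes "inj_on x {0..n}" "inj_on xh {0..n}" "k \<le> n"
  shows "rel_weight_err n x xh k = (\<Prod>j\<in>{0..n} - {k}. 1 + rel_diff_err x xh j k) - 1"
proof -
  define A where "A = {0..n} - {k}"
  have "x k \<noteq> x j" "xh k \<noteq> xh j" if "j \<in> A" for j
    using that assms unfolding A_def by (auto dest: inj_onD)
  then have nonzero: "(\<Prod>j\<in>A. x k - x j) \<noteq> 0" "(\<Prod>j\<in>A. xh k - xh j) \<noteq> 0"
    by (simp_all add: A_def)
  have "(\<Prod>j\<in>A. 1 + rel_diff_err x xh j k) = (\<Prod>j\<in>A. (xh k - xh j) / (x k - x j))"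
    by (simp add: rel_diff_err_def)
  also have "\<dots> = (\<Prod>j\<in>A. xh k - xh j) / (\<Prod>j\<in>A. x k - x j)"
    by (rule prod_dividef)
  finally show ?thesis
    using nonzero
    by (simp add: rel_weight_err_def bary_weight_def A_def[symmetric] field_simps)
qed

lemma abs_prod_one_plus_diff_le_prod_one_plus_abs_diff:
  fixes r :: "'a \<Rightarrow> real"
  assumes "finite A"
  shows "\<bar>(\<Prod>j\<in>A. 1 + r j) - 1 - (\<Sum>j\<in>A. r j)\<bar>
        \<le> (\<Prod>j\<in>A. 1 + \<bar>r j\<bar>) - 1 - (\<Sum>j\<in>A. \<bar>r j\<bar>)"
  using assms
proof (induction A rule: finite_induct)
  case empty
  then show ?case by simp
next
  case (insert a A)
  define P S Q T where "P = (\<Prod>j\<in>A. 1 + r j)" and "S = (\<Sum>j\<in>A. r j)"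
    and "Q = (\<Prod>j\<in>A. 1 + \<bar>r j\<bar>)" and "T = (\<Sum>j\<in>A. \<bar>r j\<bar>)"
  have IH: "\<bar>P - 1 - S\<bar> \<le> Q - 1 - T"
    using insert.IH by (simp add: P_def S_def Q_def T_def)
  have "\<bar>S\<bar> \<le> T"
    unfolding S_def T_def by (rule sum_abs)
  have "\<bar>(1 + r a) * P - 1 - (r a + S)\<bar> = \<bar>(1 + r a) * (P - 1 - S) + r a * S\<bar>"
    by (simp add: algebra_simps)
  also have "\<dots> \<le> \<bar>1 + r a\<bar> * \<bar>P - 1 - S\<bar> + \<bar>r a\<bar> * \<bar>S\<bar>"
    by (metis abs_mult abs_triangle_ineq)
  also have "\<dots> \<le> (1 + \<bar>r a\<bar>) * (Q - 1 - T) + \<bar>r a\<bar> * T"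
    using IH \<open>\<bar>S\<bar> \<le> T\<close> by (intro add_mono mult_mono mult_left_mono) auto
  also have "\<dots> = (1 + \<bar>r a\<bar>) * Q - 1 - (\<bar>r a\<bar> + T)"
    by (simp add: algebra_simps)
  finally show ?case
    using insert.hyps by (simp add: P_def S_def Q_def T_def)
qed

lemma prod_one_plus_le_inverse_one_minus_sum:
  fixes a :: "'a \<Rightarrow> real"
  assumes "\<And>j. j \<in> A \<Longrightarrow> a j \<ge> 0" "sum a A < 1"
  shows "(\<Prod>j\<in>A. 1 + a j) \<le> 1 / (1 - sum a A)"
proof -
  have "exp (- sum a A) \<ge> 1 - sum a A"
    using exp_ge_add_one_self[of "- sum a A"] by simp
  then have "exp (sum a A) \<le> 1 / (1 - sum a A)"
    using assms(2) by (simp add: exp_minus field_simps)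
  with prod_le_exp_sum[of A a, OF assms(1)] show ?thesis
    by linarith
qed

lemma abs_prod_one_plus_diff_le:
  fixes r :: "'a \<Rightarrow> real"
  assumes "finite A" and small: "(\<Sum>j\<in>A. \<bar>r j\<bar>) < 1"
  shows "\<bar>(\<Prod>j\<in>A. 1 + r j) - 1 - (\<Sum>j\<in>A. r j)\<bar>
        \<le> (\<Sum>j\<in>A. \<bar>r j\<bar>)\<^sup>2 / (1 - (\<Sum>j\<in>A. \<bar>r j\<bar>))"
proof -
  let ?\<xi> = "\<Sum>j\<in>A. \<bar>r j\<bar>"
  have "\<bar>(\<Prod>j\<in>A. 1 + r j) - 1 - (\<Sum>j\<in>A. r j)\<bar> \<le> (\<Prod>j\<in>A. 1 + \<bar>r j\<bar>) - 1 - ?\<xi>"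
    using assms(1) by (rule abs_prod_one_plus_diff_le_prod_one_plus_abs_diff)
  also have "\<dots> \<le> 1 / (1 - ?\<xi>) - 1 - ?\<xi>"
    using prod_one_plus_le_inverse_one_minus_sum[of A "\<lambda>j. \<bar>r j\<bar>"] small by simp
  also have "\<dots> = ?\<xi>\<^sup>2 / (1 - ?\<xi>)"
    using small by (simp add: field_simps power2_eq_square)
  finally show ?thesis .
qed

theorem lemma1:
  fixes n k :: nat and x xh :: "nat \<Rightarrow> real"
  assumes "n \<ge> 1"
    and "\<And>i. i < n \<Longrightarrow> x i < x (Suc i)"
    and "\<And>i. i < n \<Longrightarrow> xh i < xh (Suc i)"
    and "xh 0 = x 0" and "xh n = x n"
    and "k \<le> n"
    and "(\<Sum>j\<in>{0..n} - {k}. \<bar>rel_diff_err x xh j k\<bar>) < 1"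
  shows "- ((\<Sum>j\<in>{0..n} - {k}. \<bar>rel_diff_err x xh j k\<bar>)\<^sup>2
            / (1 - (\<Sum>j\<in>{0..n} - {k}. \<bar>rel_diff_err x xh j k\<bar>)) ^ 3
            * (1 + (\<Sum>j\<in>{0..n} - {k}. \<bar>rel_diff_err x xh j k\<bar>)\<^sup>2 / 4))
         \<le> rel_weight_err n x xh k - (\<Sum>j\<in>{0..n} - {k}. rel_diff_err x xh j k)
       \<and> rel_weight_err n x xh k - (\<Sum>j\<in>{0..n} - {k}. rel_diff_err x xh j k)
         \<le> (\<Sum>j\<in>{0..n} - {k}. \<bar>rel_diff_err x xh j k\<bar>)\<^sup>2
            / (1 - (\<Sum>j\<in>{0..n} - {k}. \<bar>rel_diff_err x xh j k\<bar>))"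
proof -
  let ?r = "\<lambda>j. rel_diff_err x xh j k" and ?A = "{0..n} - {k}"
  let ?\<xi> = "\<Sum>j\<in>?A. \<bar>?r j\<bar>"
  have "inj_on x {0..n}" "inj_on xh {0..n}"
    using assms(2,3) by (auto intro: strict_mono_on_imp_inj_on strict_mono_on_atLeastAtMost_Suc)
  then have "\<bar>rel_weight_err n x xh k - (\<Sum>j\<in>?A. ?r j)\<bar> \<le> ?\<xi>\<^sup>2 / (1 - ?\<xi>)"
    using abs_prod_one_plus_diff_le[of ?A ?r] assms(6,7) by (simp add: rel_weight_err_eq_prod)
  moreover have "?\<xi>\<^sup>2 / (1 - ?\<xi>) \<le> ?\<xi>\<^sup>2 / (1 - ?\<xi>) ^ 3 * (1 + ?\<xi>\<^sup>2 / 4)"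
  proof -
    have "0 \<le> ?\<xi>" "(1 - ?\<xi>) ^ 3 \<le> 1 - ?\<xi>"
      using assms(7) power_decreasing[of 1 3 "1 - ?\<xi>"] by (auto simp: sum_nonneg)
    then have "?\<xi>\<^sup>2 / (1 - ?\<xi>) \<le> ?\<xi>\<^sup>2 / (1 - ?\<xi>) ^ 3"
      using assms(7) by (intro divide_left_mono) auto
    also have "\<dots> \<le> ?\<xi>\<^sup>2 / (1 - ?\<xi>) ^ 3 * (1 + ?\<xi>\<^sup>2 / 4)"
      using assms(7) by (simp add: distrib_left)
    finally show ?thesis .
  qed
  ultimately show ?thesis
    by (auto simp: abs_le_iff)
qed

end
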